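(* For every $X\in\overline\Omega_{1/6}$, $$h(\mathcal{P}_{\mathcal{S}_{n,p}}(X))\le h(X)-\Big(\frac\beta4-\frac{M_1}{2}\Big)\|X^\top X-I_p\|_F^2 .$$
   Context: $f:\mathbb{R}^{n\times p}\to\mathbb{R}$ ($n\ge p$) is differentiable with $f,\nabla f$ locally Lipschitz. $\mathcal{A}(X):=\frac32I_p-\frac12X^\top X$, $h(X):=f(X\mathcal{A}(X))+\frac\beta4\|X^\top X-I_p\|_F^2$ with $\beta>0$, $G(X):=\nabla f(Y)|_{Y=X\mathcal{A}(X)}$. $\overline\Omega_r:=\{X\in\mathbb{R}^{n\times p}:\|X^\top X-I_p\|_F\le r\}$; $\Omega:=\{X:\|X\|_2\le1+\frac1{12}\}$; $M_1:=\sup_{X\in\Omega}\|G(X)\|_F$. For $X$ of full column rank with economic SVD $X=U\Sigma V^\top$ ($U\in\mathbb{R}^{n\times p}$, $V\in\mathbb{R}^{p\times p}$ with orthonormal columns, $\Sigma$ diagonal), $\mathcal{P}_{\mathcal{S}_{n,p}}(X):=UV^\top$, the orthogonal projection onto the Stiefel manifold $\mathcal{S}_{n,p}=\{X:X^\top X=I_p\}$. *)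

theory Defs
  imports "HOL-Analysis.Analysis"
begin

text \<open>Matrices in R^(n x p) are modelled as real^'p^'n (rows indexed by 'n, columns by 'p).
  The norm on this type is the Frobenius norm and the inner product is the Frobenius one.\<close>

definition locally_lipschitz :: "('a::metric_space \<Rightarrow> 'b::metric_space) \<Rightarrow> bool" where
  "locally_lipschitz g \<longleftrightarrow> (\<forall>x. \<exists>e>0. \<exists>L. L-lipschitz_on (ball x e) g)"

definition calA :: "real^'p^'n \<Rightarrow> real^'p^'p" where
  "calA X = (3/2) *\<^sub>R mat 1 - (1/2) *\<^sub>R (transpose X ** X)"

definition hfun :: "(real^'p^'n \<Rightarrow> real) \<Rightarrow> real \<Rightarrow> real^'p^'n \<Rightarrow> real" where
  "hfun f \<beta> X = f (X ** calA X) + \<beta> / 4 * (norm (transpose X ** X - mat 1))\<^sup>2"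

definition spec_norm :: "real^'p^'n \<Rightarrow> real" where
  "spec_norm X = onorm (\<lambda>v. X *v v)"

definition stiefel_proj :: "real^'p^'n \<Rightarrow> real^'p^'n" where
  "stiefel_proj X = (SOME Q. \<exists>(U::real^'p^'n) (V::real^'p^'p) (S::real^'p^'p).
      transpose U ** U = mat 1 \<and> transpose V ** V = mat 1 \<and>
      (\<forall>i j. i \<noteq> j \<longrightarrow> S $ i $ j = 0) \<and> (\<forall>i. S $ i $ i \<ge> 0) \<and>
      X = U ** S ** transpose V \<and> Q = U ** transpose V)"

end

theory Submission
  imports Defs
begin

text \<open>
  Since X^T X is close to I, X has full column rank and an SVD X = U diag(s) V^T with
  singular values s_i near 1; then P(X) = U V^T lies on the Stiefel manifold, where h
  reduces to f, and X A(X) = U diag(phi(s)) V^T with phi(s) = s (3 - s^2) / 2.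
  As 1 - phi(s) = (1 - s)^2 (2 + s) / 2 <= (s^2 - 1)^2 / 2, the distance from X A(X) to
  P(X) is at most |X^T X - I|^2 / 2. Because phi maps [0,1] onto [0,1], every point of the
  segment between them is W A(W) for some W of spectral norm at most 1, so the mean value
  inequality gives f(P(X)) <= f(X A(X)) + M_1 |X^T X - I|^2 / 2.
\<close>

definition diag_mat :: "('p \<Rightarrow> real) \<Rightarrow> real^'p^'p" where
  "diag_mat d = (\<chi> i j. if i = j then d i else 0)"

lemma diag_mat_component [simp]: "diag_mat d $ i $ j = (if i = j then d i else 0)"
  by (simp add: diag_mat_def)

lemma transpose_diag_mat [simp]: "transpose (diag_mat d) = diag_mat d"
  by (simp add: vec_eq_iff transpose_def)

lemma matrix_mul_diag_mat_component: "(A ** diag_mat d) $ i $ j = A $ i $ j * d j"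
  by (simp add: matrix_matrix_mult_def if_distrib cong: if_cong)

lemma diag_mat_mul: "diag_mat a ** diag_mat b = diag_mat (\<lambda>i. a i * b i)"
  by (simp add: vec_eq_iff matrix_mul_diag_mat_component)

lemma diag_mat_one [simp]: "diag_mat (\<lambda>_. 1) = mat 1"
  by (simp add: vec_eq_iff mat_def)

lemma diag_mat_add: "diag_mat a + diag_mat b = diag_mat (\<lambda>i. a i + b i)"
  by (simp add: vec_eq_iff)

lemma diag_mat_diff: "diag_mat a - diag_mat b = diag_mat (\<lambda>i. a i - b i)"
  by (simp add: vec_eq_iff)

lemma scaleR_diag_mat: "c *\<^sub>R diag_mat a = diag_mat (\<lambda>i. c * a i)"
  by (simp add: vec_eq_iff)

lemma diag_mat_mult_vector_component: "(diag_mat d *v v) $ i = d i * v $ i"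
  unfolding matrix_vector_mult_def by (simp add: if_distrib[of "\<lambda>x. x * _"] cong: if_cong)

lemma sandwich_add:
  "(V::real^'a^'b) ** A ** W + V ** B ** W = V ** (A + B) ** (W::real^'c^'a)"
  by (simp add: vec_eq_iff matrix_matrix_mult_def sum.distrib[symmetric] algebra_simps
      sum_distrib_left sum_distrib_right)

lemma sandwich_diff:
  "(V::real^'a^'b) ** A ** W - V ** B ** W = V ** (A - B) ** (W::real^'c^'a)"
  by (simp add: vec_eq_iff matrix_matrix_mult_def sum_subtractf[symmetric] algebra_simps
      sum_distrib_left sum_distrib_right)

lemma scaleR_sandwich: "c *\<^sub>R ((V::real^'a^'b) ** A ** (W::real^'c^'a)) = V ** (c *\<^sub>R A) ** W"
  by (simp add: vec_eq_iff matrix_matrix_mult_def algebra_simps sum_distrib_left sum_distrib_right)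

lemma power2_norm_eq_sum_rows: "(norm (x::real^'a^'b))\<^sup>2 = (\<Sum>i\<in>UNIV. (norm (x $ i))\<^sup>2)"
  by (simp add: power2_norm_eq_inner inner_vec_def)

lemma power2_norm_eq_trace: "(norm (A::real^'a^'b))\<^sup>2 = trace (transpose A ** A)"
proof -
  have "(norm A)\<^sup>2 = (\<Sum>i\<in>UNIV. \<Sum>j\<in>UNIV. A$i$j * A$i$j)"
    by (simp add: power2_norm_eq_inner inner_vec_def)
  also have "\<dots> = (\<Sum>j\<in>UNIV. \<Sum>i\<in>UNIV. A$i$j * A$i$j)"
    by (rule sum.swap)
  also have "\<dots> = trace (transpose A ** A)"
    by (simp add: trace_def matrix_matrix_mult_def transpose_def)
  finally show ?thesis .
qed

lemma power2_norm_diag_mat: "(norm (diag_mat d))\<^sup>2 = (\<Sum>i\<in>UNIV. (d i)\<^sup>2)"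
  by (simp only: power2_norm_eq_trace) (simp add: diag_mat_mul trace_def power2_eq_square)

lemma abs_le_norm_diag_mat: "\<bar>d i\<bar> \<le> norm (diag_mat d)"
proof -
  have "\<bar>diag_mat d $ i $ i\<bar> \<le> norm (diag_mat d $ i)"
    by (rule component_le_norm_cart)
  also have "\<dots> \<le> norm (diag_mat d)"
    by (rule Finite_Cartesian_Product.norm_nth_le)
  finally show ?thesis
    by simp
qed

lemma norm_orthonormal_sandwich:
  fixes U :: "real^'p^'n" and V :: "real^'p^'q" and D :: "real^'p^'p"
  assumes U: "transpose U ** U = mat 1" and V: "transpose V ** V = mat 1"
  shows "norm (U ** D ** transpose V) = norm D"
proof -
  have "(norm (U ** D ** transpose V))\<^sup>2
      = trace (V ** transpose D ** (transpose U ** U) ** D ** transpose V)"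
    by (simp add: power2_norm_eq_trace matrix_transpose_mul matrix_mul_assoc)
  also have "\<dots> = trace (V ** (transpose D ** D ** transpose V))"
    by (simp add: U matrix_mul_assoc)
  also have "\<dots> = trace ((transpose D ** D ** transpose V) ** V)"
    by (rule trace_mul_sym)
  also have "\<dots> = (norm D)\<^sup>2"
    by (simp add: V power2_norm_eq_trace flip: matrix_mul_assoc)
  finally show ?thesis
    by (simp add: power2_eq_iff_nonneg)
qed

lemma norm_matrix_vector_mult_le: "norm (A *v x) \<le> norm (A::real^'a^'b) * norm x"
proof -
  have "(norm (A *v x))\<^sup>2 = (\<Sum>i\<in>UNIV. (A $ i \<bullet> x)\<^sup>2)"
    by (simp only: power2_norm_eq_inner) (simp add: inner_vec_def matrix_vector_mult_def power2_eq_square)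
  also have "\<dots> \<le> (\<Sum>i\<in>UNIV. (norm (A $ i) * norm x)\<^sup>2)"
    by (intro sum_mono power2_le_iff_abs_le[THEN iffD2] Cauchy_Schwarz_ineq2) simp
  also have "\<dots> = (norm A * norm x)\<^sup>2"
    by (simp add: power_mult_distrib power2_norm_eq_sum_rows sum_distrib_right)
  finally show ?thesis
    by (simp add: power2_le_iff_abs_le)
qed

lemma norm_orthonormal_mult_vector:
  fixes U :: "real^'p^'n"
  assumes "transpose U ** U = mat 1"
  shows "norm (U *v x) = norm x"
proof -
  have "(U *v x) \<bullet> (U *v x) = (transpose U *v (U *v x)) \<bullet> x"
    by (metis dot_lmul_matrix inner_commute transpose_matrix_vector)
  also have "\<dots> = x \<bullet> x"
    by (simp add: matrix_vector_mul_assoc assms)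
  finally show ?thesis
    by (metis norm_eq_sqrt_inner)
qed

lemma norm_diag_mat_mult_vector_le:
  assumes "\<And>i. \<bar>d i\<bar> \<le> 1"
  shows "norm (diag_mat d *v x) \<le> norm x"
proof -
  have "(norm (diag_mat d *v x))\<^sup>2 = (\<Sum>i\<in>UNIV. (d i)\<^sup>2 * (x $ i)\<^sup>2)"
    by (simp only: power2_norm_eq_inner)
      (simp add: inner_vec_def diag_mat_mult_vector_component power2_eq_square mult_ac)
  also have "\<dots> \<le> (\<Sum>i\<in>UNIV. (x $ i)\<^sup>2)"
    using assms by (intro sum_mono mult_left_le_one_le) (auto simp: abs_square_le_1)
  also have "\<dots> = (norm x)\<^sup>2"
    by (simp only: power2_norm_eq_inner) (simp add: inner_vec_def power2_eq_square)
  finally show ?thesis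
    by (simp add: power2_le_iff_abs_le)
qed

lemma sum_power2_le_power2_sum:
  fixes a :: "'i \<Rightarrow> real"
  assumes "finite A" "\<And>i. i \<in> A \<Longrightarrow> a i \<ge> 0"
  shows "(\<Sum>i\<in>A. (a i)\<^sup>2) \<le> (\<Sum>i\<in>A. a i)\<^sup>2"
proof -
  have "(\<Sum>i\<in>A. (a i)\<^sup>2) \<le> (\<Sum>i\<in>A. a i * (\<Sum>j\<in>A. a j))"
    using assms by (intro sum_mono) (auto simp: power2_eq_square intro!: mult_left_mono member_le_sum)
  also have "\<dots> = (\<Sum>i\<in>A. a i)\<^sup>2"
    by (simp add: power2_eq_square sum_distrib_right)
  finally show ?thesis .
qed

lemma norm_diag_mat_le_power2:
  assumes "\<And>i. \<bar>a i\<bar> \<le> c * (b i)\<^sup>2" "c \<ge> 0"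
  shows "norm (diag_mat a) \<le> c * (norm (diag_mat b))\<^sup>2"
proof -
  have "(norm (diag_mat a))\<^sup>2 = (\<Sum>i\<in>UNIV. (a i)\<^sup>2)"
    by (rule power2_norm_diag_mat)
  also have "\<dots> \<le> (\<Sum>i\<in>UNIV. c\<^sup>2 * ((b i)\<^sup>2)\<^sup>2)"
    using assms by (intro sum_mono) (metis power2_le_iff_abs_le power_mult_distrib zero_le_mult_iff zero_le_power2)
  also have "\<dots> \<le> c\<^sup>2 * (\<Sum>i\<in>UNIV. (b i)\<^sup>2)\<^sup>2"
    by (simp only: sum_distrib_left[symmetric]) (intro mult_left_mono sum_power2_le_power2_sum, auto)
  also have "\<dots> = (c * (norm (diag_mat b))\<^sup>2)\<^sup>2"
    by (simp add: power2_norm_diag_mat power_mult_distrib)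
  finally show ?thesis
    using assms(2) by (simp add: power2_le_iff_abs_le)
qed

section \<open>Spectral theorem for symmetric matrices\<close>

lemma symmetric_matrix_inner_commute:
  fixes M :: "real^'p^'p"
  assumes "transpose M = M"
  shows "(M *v x) \<bullet> y = x \<bullet> (M *v y)"
  by (metis assms dot_lmul_matrix inner_commute transpose_matrix_vector)

lemma linear_le_quadratic_imp_nonpos:
  fixes a b :: real
  assumes "\<And>t. 0 < t \<Longrightarrow> t * a \<le> t * t * b"
  shows "a \<le> 0"
proof (rule ccontr)
  assume "\<not> a \<le> 0"
  define t where "t = a / (\<bar>b\<bar> + 1)"
  have t: "t > 0"
    using \<open>\<not> a \<le> 0\<close> by (simp add: t_def)
  then have "a \<le> t * b"
    using assms[OF t] by (simp add: mult.assoc)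
  also have "\<dots> < t * (\<bar>b\<bar> + 1)"
    using t by (intro mult_strict_left_mono) auto
  also have "\<dots> = a"
    by (simp add: t_def)
  finally show False
    by simp
qed

lemma rayleigh_bound_imp_eigenvector:
  fixes M :: "real^'p^'p"
  assumes sym: "transpose M = M" and W: "subspace W" and inv: "\<And>x. x \<in> W \<Longrightarrow> M *v x \<in> W"
    and u: "u \<in> W" "u \<bullet> u = 1"
    and bound: "\<And>x. x \<in> W \<Longrightarrow> x \<bullet> (M *v x) \<le> (u \<bullet> (M *v u)) * (x \<bullet> x)"
  shows "M *v u = (u \<bullet> (M *v u)) *\<^sub>R u"
proof -
  define l where "l = u \<bullet> (M *v u)"
  define w where "w = M *v u - l *\<^sub>R u"
  define a where "a = w \<bullet> w"
  define c where "c = w \<bullet> (M *v w)"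
  have wW: "w \<in> W"
    unfolding w_def using u W inv by (simp add: subspace_diff subspace_scale)
  have uw: "u \<bullet> w = 0"
    by (simp add: w_def inner_diff_right u l_def)
  have uMw: "u \<bullet> (M *v w) = a"
  proof -
    have "u \<bullet> (M *v w) = (M *v u) \<bullet> w"
      by (simp add: symmetric_matrix_inner_commute[OF sym])
    also have "\<dots> = a"
      using uw by (simp add: a_def w_def inner_diff_left inner_commute)
    finally show ?thesis .
  qed
  have wMu: "w \<bullet> (M *v u) = a"
    using uMw symmetric_matrix_inner_commute[OF sym, of w u] by (simp add: inner_commute)
  \<comment> \<open>the bound along the line u + t w forces the first-order term 2 t a to vanish\<close>
  have "t * (2 * a) \<le> t * t * (l * a - c)" if "t > 0" for t
  proof -
    have "(u + t *\<^sub>R w) \<bullet> (M *v (u + t *\<^sub>R w)) \<le> l * ((u + t *\<^sub>R w) \<bullet> (u + t *\<^sub>R w))"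
      unfolding l_def using u wW W by (intro bound) (simp add: subspace_add subspace_scale)
    then show ?thesis
      by (simp add: matrix_vector_right_distrib matrix_vector_mult_scaleR inner_add_left
          inner_add_right u uw inner_commute[of w u] uMw wMu algebra_simps flip: a_def c_def l_def)
  qed
  then have "2 * a \<le> 0"
    by (rule linear_le_quadratic_imp_nonpos)
  then have "a = 0"
    using inner_ge_zero[of w] by (simp add: a_def)
  then have "w = 0"
    by (simp add: a_def)
  then show ?thesis
    by (simp add: w_def l_def)
qed

lemma symmetric_matrix_invariant_subspace_eigenvector:
  fixes M :: "real^'p^'p"
  assumes sym: "transpose M = M" and W: "subspace W" and inv: "\<And>x. x \<in> W \<Longrightarrow> M *v x \<in> W"
    and nontrivial: "\<not> W \<subseteq> {0}"
  shows "\<exists>u\<in>W. norm u = 1 \<and> M *v u = (u \<bullet> (M *v u)) *\<^sub>R u"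
proof -
  let ?S = "W \<inter> sphere 0 1"
  obtain w where w: "w \<in> W" "w \<noteq> 0"
    using nontrivial by auto
  have "(1 / norm w) *\<^sub>R w \<in> ?S"
    using w W by (auto simp: subspace_scale)
  moreover have "compact ?S"
    using W by (intro closed_Int_compact) (auto simp: closed_subspace)
  moreover have "continuous_on ?S (\<lambda>x. x \<bullet> (M *v x))"
    by (intro continuous_intros)
  ultimately obtain u where u: "u \<in> ?S"
    and max: "\<And>y. y \<in> ?S \<Longrightarrow> y \<bullet> (M *v y) \<le> u \<bullet> (M *v u)"
    using continuous_attains_sup[of ?S "\<lambda>x. x \<bullet> (M *v x)"] by blast
  have "x \<bullet> (M *v x) \<le> (u \<bullet> (M *v u)) * (x \<bullet> x)" if "x \<in> W" for x
  proof (cases "x = 0")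
    case False
    let ?y = "(1 / norm x) *\<^sub>R x"
    have "?y \<bullet> (M *v ?y) \<le> u \<bullet> (M *v u)"
      using max[of ?y] that False W by (simp add: subspace_scale)
    then show ?thesis
      using False by (simp add: matrix_vector_mult_scaleR dot_square_norm power2_eq_square
          field_simps)
  qed simp
  moreover have "u \<bullet> u = 1"
    using u by (simp add: dot_square_norm)
  ultimately show ?thesis
    using u rayleigh_bound_imp_eigenvector[OF sym W inv] by auto
qed

lemma subset_span_insert_orthogonal_complement:
  fixes u :: "'a::real_inner"
  assumes "subspace W" "u \<in> W" "u \<bullet> u = 1" "{x\<in>W. x \<bullet> u = 0} \<subseteq> span B"
  shows "W \<subseteq> span (insert u B)"
proof
  fix x assume "x \<in> W"
  then have "x - (x \<bullet> u) *\<^sub>R u \<in> {x\<in>W. x \<bullet> u = 0}"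
    using assms(1-3) by (simp add: subspace_diff subspace_scale inner_diff_left)
  then have "x - (x \<bullet> u) *\<^sub>R u \<in> span (insert u B)"
    using assms(4) span_mono[of B "insert u B"] by blast
  then show "x \<in> span (insert u B)"
    by (metis span_add_eq span_base span_scale insertI1 diff_add_cancel)
qed

lemma symmetric_matrix_invariant_subspace_eigenbasis:
  fixes M :: "real^'p^'p"
  assumes sym: "transpose M = M"
  shows "subspace W \<Longrightarrow> (\<And>x. x \<in> W \<Longrightarrow> M *v x \<in> W) \<Longrightarrow>
    \<exists>B\<subseteq>W. W \<subseteq> span B \<and> pairwise orthogonal B \<and>
      (\<forall>b\<in>B. norm b = 1 \<and> M *v b = (b \<bullet> (M *v b)) *\<^sub>R b)"
proof (induction "dim W" arbitrary: W rule: less_induct)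
  case less
  show ?case
  proof (cases "W \<subseteq> {0}")
    case True
    then show ?thesis
      by (intro exI[of _ "{}"]) auto
  next
    case False
    then obtain u where u: "u \<in> W" "norm u = 1" and Mu: "M *v u = (u \<bullet> (M *v u)) *\<^sub>R u"
      using symmetric_matrix_invariant_subspace_eigenvector[OF sym less.prems] by blast
    have uu: "u \<bullet> u = 1"
      using u by (simp add: dot_square_norm)
    define W' where "W' = {x\<in>W. x \<bullet> u = 0}"
    have W': "subspace W'"
      using less.prems(1) unfolding W'_def subspace_def by (auto simp: inner_add_left)
    have inv': "M *v x \<in> W'" if "x \<in> W'" for x
      using that less.prems(2) symmetric_matrix_inner_commute[OF sym, of x u]
      by (auto simp: W'_def) (metis Mu inner_scaleR_right mult_zero_right)
    have "u \<notin> W'"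
      using uu by (simp add: W'_def)
    then have "W' \<subset> W"
      using u unfolding W'_def by blast
    then have "dim W' < dim W"
      using W' less.prems(1) by (metis dim_psubset span_eq_iff)
    then obtain B' where B': "B' \<subseteq> W'" "W' \<subseteq> span B'" "pairwise orthogonal B'"
      "\<forall>b\<in>B'. norm b = 1 \<and> M *v b = (b \<bullet> (M *v b)) *\<^sub>R b"
      using less.hyps W' inv' by blast
    have "W \<subseteq> span (insert u B')"
      using subset_span_insert_orthogonal_complement[OF less.prems(1) u(1) uu] B'(2)
      by (simp add: W'_def)
    moreover have "pairwise orthogonal (insert u B')"
      using B'(1,3) by (auto simp: pairwise_insert W'_def orthogonal_def inner_commute)
    ultimately show ?thesis
      using u Mu B' by (intro exI[of _ "insert u B'"]) (auto simp: W'_def)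
  qed
qed

lemma symmetric_matrix_diagonalizable:
  fixes M :: "real^'p^'p"
  assumes sym: "transpose M = M"
  shows "\<exists>V l. orthogonal_matrix V \<and> M ** V = V ** diag_mat l"
proof -
  obtain B where B: "UNIV \<subseteq> span B" "pairwise orthogonal B"
     "\<forall>b\<in>B. norm b = 1 \<and> M *v b = (b \<bullet> (M *v b)) *\<^sub>R b"
    using symmetric_matrix_invariant_subspace_eigenbasis[OF sym, of UNIV] by auto
  have "independent B"
    using B(2,3) pairwise_orthogonal_independent by force
  then have "finite B" "card B = CARD('p)"
    using indep_card_eq_dim_span[of B] B(1) dim_span[of B]
    by (auto simp: top.extremum_unique)
  then obtain e where e: "bij_betw e (UNIV::'p set) B"
    using finite_same_card_bij[of "UNIV::'p set" B] by auto
  then have eB: "e k \<in> B" and e_inj: "e k = e m \<Longrightarrow> k = m" for k m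
    by (auto simp: bij_betw_def inj_on_def)
  define V :: "real^'p^'p" where "V = (\<chi> i k. e k $ i)"
  define l where "l k = e k \<bullet> (M *v e k)" for k
  have "(transpose V ** V) $ k $ m = e k \<bullet> e m" for k m
    by (simp add: V_def matrix_matrix_mult_def transpose_def inner_vec_def)
  also have "e k \<bullet> e m = mat 1 $ k $ m" for k m
    using B(2,3) eB e_inj[of k m] by (cases "k = m") (auto simp: pairwise_def orthogonal_def mat_def dot_square_norm)
  finally have "orthogonal_matrix V"
    by (simp add: orthogonal_matrix vec_eq_iff)
  moreover have "(M ** V) $ i $ k = (V ** diag_mat l) $ i $ k" for i k
  proof -
    have "(M ** V) $ i $ k = (M *v e k) $ i"
      by (simp add: V_def matrix_matrix_mult_def matrix_vector_mult_def)
    also have "M *v e k = l k *\<^sub>R e k"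
      using B(3) eB unfolding l_def by blast
    also have "(l k *\<^sub>R e k) $ i = l k * e k $ i"
      by simp
    finally show ?thesis
      by (simp add: matrix_mul_diag_mat_component V_def)
  qed
  ultimately show ?thesis
    by (auto simp: vec_eq_iff)
qed

section \<open>Singular value decomposition\<close>

lemma gram_diagonal_eq_column_inner: "(transpose A ** A) $ k $ k = column k A \<bullet> column k A"
  by (simp add: matrix_matrix_mult_def transpose_def column_def inner_vec_def)

lemma column_matrix_mult: "column k (A ** B) = A *v column k B"
  by (simp add: vec_eq_iff column_def matrix_matrix_mult_def matrix_vector_mult_def)

lemma gram_diagonalization_full_column_rank:
  fixes X :: "real^'p^'n"
  assumes rank: "rank X = CARD('p)"
  obtains V l where "orthogonal_matrix V" "transpose (X ** V) ** (X ** V) = diag_mat l"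
    "\<And>k. l k > 0"
proof -
  have sym: "transpose (transpose X ** X) = transpose X ** X"
    by (simp add: matrix_transpose_mul)
  obtain V l where V: "orthogonal_matrix V" and XXV: "transpose X ** X ** V = V ** diag_mat l"
    using symmetric_matrix_diagonalizable[OF sym] by blast
  have "transpose (X ** V) ** (X ** V) = transpose V ** (transpose X ** X ** V)"
    by (simp add: matrix_transpose_mul matrix_mul_assoc)
  also have "\<dots> = diag_mat l"
    using V by (simp add: XXV matrix_mul_assoc orthogonal_matrix)
  finally have gram: "transpose (X ** V) ** (X ** V) = diag_mat l" .
  have "l k > 0" for k
  proof -
    have "column k V \<bullet> column k V = 1"
      using V gram_diagonal_eq_column_inner[of V k] by (simp add: orthogonal_matrix mat_def)
    then have "X *v column k V \<noteq> 0"
      using rank by (auto simp: full_rank_injective linear_injective_0[OF matrix_vector_mul_linear])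
    moreover have "l k = (X *v column k V) \<bullet> (X *v column k V)"
      using gram_diagonal_eq_column_inner[of "X ** V" k] by (simp add: gram column_matrix_mult)
    ultimately show ?thesis
      by simp
  qed
  with V gram show ?thesis
    by (rule that)
qed

lemma svd_full_column_rank:
  fixes X :: "real^'p^'n"
  assumes rank: "rank X = CARD('p)"
  shows "\<exists>U V s. transpose U ** U = mat 1 \<and> orthogonal_matrix V \<and> (\<forall>i. s i > 0)
    \<and> X = U ** diag_mat s ** transpose V"
proof -
  obtain V l where V: "orthogonal_matrix V" and gram: "transpose (X ** V) ** (X ** V) = diag_mat l"
    and l_pos: "\<And>k. l k > 0"
    using gram_diagonalization_full_column_rank[OF rank] by blast
  define s where "s k = sqrt (l k)" for k
  have s_pos: "s k > 0" and s_sq: "s k * s k = l k" for k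
    using l_pos[of k] by (simp_all add: s_def)
  define U where "U = X ** V ** diag_mat (\<lambda>k. 1 / s k)"
  have "transpose U ** U = diag_mat (\<lambda>k. 1 / s k) ** diag_mat l ** diag_mat (\<lambda>k. 1 / s k)"
    by (simp add: U_def matrix_transpose_mul matrix_mul_assoc flip: gram)
  also have "\<dots> = mat 1"
  proof -
    have "1 / s k * l k * (1 / s k) = 1" for k
      using s_pos[of k] by (simp flip: s_sq)
    then show ?thesis
      by (simp only: diag_mat_mul diag_mat_one)
  qed
  finally have U: "transpose U ** U = mat 1" .
  have "U ** diag_mat s ** transpose V = X ** V ** (diag_mat (\<lambda>k. 1 / s k) ** diag_mat s) ** transpose V"
    by (simp add: U_def matrix_mul_assoc)
  also have "\<dots> = X"
    using s_pos V by (simp add: diag_mat_mul less_imp_neq[symmetric] flip: matrix_mul_assoc)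
      (simp add: matrix_mul_assoc orthogonal_matrix_def)
  finally show ?thesis
    using U V s_pos by blast
qed

lemma stiefel_proj_svd:
  fixes X :: "real^'p^'n"
  assumes "rank X = CARD('p)"
  obtains U V s where "transpose U ** U = mat 1" "orthogonal_matrix V" "\<And>i. s i \<ge> 0"
    "X = U ** diag_mat s ** transpose V" "stiefel_proj X = U ** transpose V"
proof -
  let ?svd = "\<lambda>Q. \<exists>(U::real^'p^'n) (V::real^'p^'p) (S::real^'p^'p).
      transpose U ** U = mat 1 \<and> transpose V ** V = mat 1 \<and>
      (\<forall>i j. i \<noteq> j \<longrightarrow> S $ i $ j = 0) \<and> (\<forall>i. S $ i $ i \<ge> 0) \<and>
      X = U ** S ** transpose V \<and> Q = U ** transpose V"
  have "\<exists>Q. ?svd Q"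
    using svd_full_column_rank[OF assms]
    by (metis less_imp_le orthogonal_matrix diag_mat_component)
  then have "?svd (stiefel_proj X)"
    unfolding stiefel_proj_def by (rule someI_ex)
  then obtain U :: "real^'p^'n" and V :: "real^'p^'p" and S :: "real^'p^'p"
    where "transpose U ** U = mat 1" "transpose V ** V = mat 1"
      "\<forall>i j. i \<noteq> j \<longrightarrow> S $ i $ j = 0" "\<forall>i. S $ i $ i \<ge> 0"
      "X = U ** S ** transpose V" "stiefel_proj X = U ** transpose V"
    by blast
  moreover have "S = diag_mat (\<lambda>i. S $ i $ i)"
    using calculation(3) by (auto simp: vec_eq_iff)
  ultimately show ?thesis
    using that[of U V "\<lambda>i. S $ i $ i"] by (auto simp: orthogonal_matrix)
qed

section \<open>The Newton-Schulz map\<close>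

text \<open>X \<mapsto> X ** calA X is one Newton-Schulz step towards the polar factor; on singular
  values it acts by this map.\<close>

definition newton_schulz :: "real \<Rightarrow> real" where
  "newton_schulz r = r * (3 - r * r) / 2"

lemma one_minus_newton_schulz: "1 - newton_schulz r = (1 - r)\<^sup>2 * (2 + r) / 2"
  by (simp add: newton_schulz_def power2_eq_square field_simps)

lemma newton_schulz_le_one: "r \<ge> 0 \<Longrightarrow> newton_schulz r \<le> 1"
  using one_minus_newton_schulz[of r] by (smt (verit) divide_nonneg_nonneg mult_nonneg_nonneg zero_le_power2)

lemma newton_schulz_nonneg: "0 \<le> r \<Longrightarrow> r * r \<le> 3 \<Longrightarrow> 0 \<le> newton_schulz r"
  by (simp add: newton_schulz_def)

lemma one_minus_newton_schulz_le:
  assumes "1 \<le> r * r + r"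
  shows "1 - newton_schulz r \<le> (r * r - 1)\<^sup>2 / 2"
proof -
  have "(1 - r)\<^sup>2 * (2 + r) \<le> (1 - r)\<^sup>2 * (1 + r)\<^sup>2"
    using assms by (intro mult_left_mono zero_le_power2) (simp add: power2_eq_square algebra_simps)
  also have "\<dots> = (r * r - 1)\<^sup>2"
    by (simp add: power2_eq_square algebra_simps)
  finally show ?thesis
    by (simp add: one_minus_newton_schulz)
qed

lemma newton_schulz_onto_unit_interval:
  assumes "0 \<le> z" "z \<le> 1"
  shows "\<exists>r. 0 \<le> r \<and> r \<le> 1 \<and> newton_schulz r = z"
proof -
  have "continuous_on {0..1} newton_schulz"
    unfolding newton_schulz_def by (intro continuous_intros) auto
  then show ?thesis
    using IVT'[of newton_schulz 0 z 1] assms by (auto simp: newton_schulz_def)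
qed

lemma newton_schulz_near_one:
  assumes s: "0 \<le> s" "\<bar>s * s - 1\<bar> \<le> 1/6"
  shows "0 \<le> newton_schulz s" "newton_schulz s \<le> 1" "\<bar>1 - newton_schulz s\<bar> \<le> (s * s - 1)\<^sup>2 / 2"
proof -
  have "s \<ge> 1/6"
  proof (rule ccontr)
    assume "\<not> s \<ge> 1/6"
    then have "s * s \<le> 1/6 * (1/6)"
      using s(1) by (intro mult_mono) auto
    then show False
      using s(2) by linarith
  qed
  then have "1 \<le> s * s + s"
    using s(2) by linarith
  moreover have "s * s \<le> 3"
    using s(2) by linarith
  ultimately show "0 \<le> newton_schulz s" "newton_schulz s \<le> 1"
      "\<bar>1 - newton_schulz s\<bar> \<le> (s * s - 1)\<^sup>2 / 2"
    using s(2) newton_schulz_nonneg[OF s(1)] newton_schulz_le_one[OF s(1)]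
      one_minus_newton_schulz_le[of s] by auto
qed

lemma gram_orthonormal_sandwich:
  fixes U :: "real^'p^'n" and V :: "real^'p^'p"
  assumes U: "transpose U ** U = mat 1"
  shows "transpose (U ** diag_mat r ** transpose V) ** (U ** diag_mat r ** transpose V)
    = V ** diag_mat (\<lambda>i. r i * r i) ** transpose V"
proof -
  have "transpose (U ** diag_mat r ** transpose V) ** (U ** diag_mat r ** transpose V)
      = V ** diag_mat r ** (transpose U ** U) ** diag_mat r ** transpose V"
    by (simp add: matrix_transpose_mul matrix_mul_assoc)
  then show ?thesis
    by (simp add: U diag_mat_mul flip: matrix_mul_assoc)
qed

lemma norm_gram_minus_one_orthonormal_sandwich:
  fixes U :: "real^'p^'n" and V :: "real^'p^'p"
  assumes U: "transpose U ** U = mat 1" and V: "orthogonal_matrix V"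
    and X: "X = U ** diag_mat s ** transpose V"
  shows "norm (transpose X ** X - mat 1) = norm (diag_mat (\<lambda>i. s i * s i - 1))"
proof -
  have VV: "transpose V ** V = mat 1" "V ** transpose V = mat 1"
    using V by (simp_all add: orthogonal_matrix_def)
  have "transpose X ** X - mat 1 = V ** diag_mat (\<lambda>i. s i * s i - 1) ** transpose V"
  proof -
    have "mat 1 = V ** diag_mat (\<lambda>_. 1) ** transpose V"
      by (simp add: VV)
    then show ?thesis
      unfolding X gram_orthonormal_sandwich[OF U]
      by (simp only: sandwich_diff diag_mat_diff)
  qed
  then show ?thesis
    using norm_orthonormal_sandwich[OF VV(1) VV(1)] by simp
qed

lemma calA_orthonormal_sandwich:
  fixes U :: "real^'p^'n" and V :: "real^'p^'p"
  assumes U: "transpose U ** U = mat 1" and V: "orthogonal_matrix V"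
  shows "(U ** diag_mat r ** transpose V) ** calA (U ** diag_mat r ** transpose V)
    = U ** diag_mat (\<lambda>i. newton_schulz (r i)) ** transpose V"
proof -
  have VV: "transpose V ** V = mat 1" "V ** transpose V = mat 1"
    using V by (simp_all add: orthogonal_matrix_def)
  let ?D = "diag_mat (\<lambda>i. 3/2 - r i * r i / 2)"
  have one: "mat 1 = V ** diag_mat (\<lambda>_. 1) ** transpose V"
    by (simp add: VV)
  have "calA (U ** diag_mat r ** transpose V) = V ** ?D ** transpose V"
    unfolding calA_def gram_orthonormal_sandwich[OF U]
    by (subst one) (simp only: scaleR_sandwich sandwich_diff scaleR_diag_mat diag_mat_diff, simp)
  then have "(U ** diag_mat r ** transpose V) ** calA (U ** diag_mat r ** transpose V)
      = U ** diag_mat r ** (transpose V ** V) ** ?D ** transpose V"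
    by (simp add: matrix_mul_assoc)
  also have "\<dots> = U ** (diag_mat r ** ?D) ** transpose V"
    by (simp add: VV matrix_mul_assoc)
  also have "diag_mat r ** ?D = diag_mat (\<lambda>i. newton_schulz (r i))"
    by (simp add: diag_mat_mul newton_schulz_def field_simps)
  finally show ?thesis .
qed

lemma calA_stiefel: "transpose Q ** Q = mat 1 \<Longrightarrow> calA Q = mat 1"
  by (simp add: calA_def vec_eq_iff mat_def)

lemma hfun_stiefel: "transpose Q ** Q = mat 1 \<Longrightarrow> hfun f \<beta> Q = f Q"
  by (simp add: hfun_def calA_stiefel)

lemma stiefel_proj_orthonormal:
  fixes X :: "real^'p^'n"
  assumes "rank X = CARD('p)"
  shows "transpose (stiefel_proj X) ** stiefel_proj X = mat 1"
proof -
  obtain U V s where "transpose U ** U = mat 1" "orthogonal_matrix V"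
    and "stiefel_proj X = U ** transpose V"
    using stiefel_proj_svd[OF assms] by metis
  then show ?thesis
    using gram_orthonormal_sandwich[of U "\<lambda>_. 1" V] by (simp add: orthogonal_matrix_def)
qed

lemma spec_norm_le_iff:
  fixes Z :: "real^'p^'n"
  shows "spec_norm Z \<le> c \<longleftrightarrow> (\<forall>v. norm (Z *v v) \<le> c * norm v)"
proof
  assume "spec_norm Z \<le> c"
  then show "\<forall>v. norm (Z *v v) \<le> c * norm v"
    using onorm[OF matrix_vector_mul_bounded_linear, of Z] unfolding spec_norm_def
    by (meson dual_order.trans mult_right_mono norm_ge_zero)
next
  assume "\<forall>v. norm (Z *v v) \<le> c * norm v"
  then show "spec_norm Z \<le> c"
    unfolding spec_norm_def by (intro onorm_le) auto
qed

lemma spec_norm_orthonormal_sandwich_le: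
  fixes U :: "real^'p^'n" and V :: "real^'p^'p"
  assumes U: "transpose U ** U = mat 1" and V: "orthogonal_matrix V" and r: "\<And>i. \<bar>r i\<bar> \<le> 1"
  shows "spec_norm (U ** diag_mat r ** transpose V) \<le> 1"
  unfolding spec_norm_le_iff
proof
  fix v :: "real^'p"
  have "norm ((U ** diag_mat r ** transpose V) *v v) = norm (diag_mat r *v (transpose V *v v))"
    by (simp add: norm_orthonormal_mult_vector[OF U] flip: matrix_vector_mul_assoc)
  also have "\<dots> \<le> norm (transpose V *v v)"
    using r by (rule norm_diag_mat_mult_vector_le)
  also have "\<dots> = norm v"
    using V by (intro norm_orthonormal_mult_vector) (simp add: orthogonal_matrix_def)
  finally show "norm ((U ** diag_mat r ** transpose V) *v v) \<le> 1 * norm v"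
    by simp
qed

lemma compact_spec_norm_le: "compact {Z::real^'p^'n. spec_norm Z \<le> c}"
proof -
  have eq: "{Z::real^'p^'n. spec_norm Z \<le> c} = (\<Inter>v. {Z. norm (Z *v v) - c * norm v \<le> 0})"
    by (auto simp: spec_norm_le_iff)
  have "closed {Z::real^'p^'n. norm (Z *v v) - c * norm v \<le> 0}" for v
    unfolding matrix_vector_mult_def by (intro closed_Collect_le continuous_intros)
  then have "closed {Z::real^'p^'n. spec_norm Z \<le> c}"
    unfolding eq by (intro closed_INT) auto
  moreover have "norm Z \<le> real CARD('n) * (real CARD('p) * \<bar>c\<bar>)" if "spec_norm Z \<le> c"
    for Z :: "real^'p^'n"
  proof -
    have entry: "\<bar>Z $ i $ j\<bar> \<le> \<bar>c\<bar>" for i j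
      using matrix_component_le_onorm[of Z i j] that unfolding spec_norm_def by auto
    have "norm Z \<le> (\<Sum>i\<in>UNIV. norm (Z $ i))"
      unfolding norm_vec_def by (rule L2_set_le_sum) auto
    also have "\<dots> \<le> (\<Sum>i\<in>(UNIV::'n set). \<Sum>j\<in>(UNIV::'p set). \<bar>c\<bar>)"
      by (intro sum_mono order.trans[OF norm_le_l1_cart] entry)
    finally show ?thesis
      by simp
  qed
  then have "bounded {Z::real^'p^'n. spec_norm Z \<le> c}"
    by (auto simp: bounded_iff)
  ultimately show ?thesis
    by (simp add: compact_eq_bounded_closed)
qed

lemma full_rank_if_gram_near_identity:
  fixes X :: "real^'p^'n"
  assumes "norm (transpose X ** X - mat 1) < 1"
  shows "rank X = CARD('p)"
  unfolding full_rank_injective linear_injective_0[OF matrix_vector_mul_linear]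
proof (intro allI impI)
  fix v assume "X *v v = 0"
  then have "(transpose X ** X - mat 1) *v v = - v"
    by (simp add: matrix_vector_mult_diff_rdistrib flip: matrix_vector_mul_assoc)
  then have "norm v \<le> norm (transpose X ** X - mat 1) * norm v"
    by (metis norm_matrix_vector_mult_le norm_minus_cancel)
  then have "(1 - norm (transpose X ** X - mat 1)) * norm v \<le> 0"
    by (simp add: algebra_simps)
  then show "v = 0"
    using assms by (simp add: mult_le_0_iff)
qed

lemma locally_lipschitz_imp_continuous: "locally_lipschitz g \<Longrightarrow> continuous_on UNIV g"
  unfolding locally_lipschitz_def
  by (metis centre_in_ball continuous_at_imp_continuous_on continuous_on_interior
      interior_ball lipschitz_on_continuous_on)

section \<open>The descent estimate\<close>

lemma gradient_bound_closed_segment: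
  fixes f :: "'a::real_inner \<Rightarrow> real"
  assumes diff: "\<And>x. x \<in> closed_segment a b \<Longrightarrow> (f has_derivative (\<lambda>h. g x \<bullet> h)) (at x)"
    and bound: "\<And>x. x \<in> closed_segment a b \<Longrightarrow> norm (g x) \<le> M"
  shows "f b \<le> f a + M * norm (b - a)"
proof -
  have "M \<ge> 0"
    using bound[of a] norm_ge_zero order_trans by blast
  have "norm (f b - f a) \<le> M * norm (b - a)"
  proof (rule differentiable_bound[where f' = "\<lambda>x h. g x \<bullet> h"])
    show "(f has_derivative (\<lambda>h. g x \<bullet> h)) (at x within closed_segment a b)"
      if "x \<in> closed_segment a b" for x
      using diff[OF that] by (rule has_derivative_at_withinI)
    show "onorm (\<lambda>h. g x \<bullet> h) \<le> M" if "x \<in> closed_segment a b" for x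
    proof (rule onorm_bound[OF \<open>M \<ge> 0\<close>])
      fix h
      have "norm (g x \<bullet> h) \<le> norm (g x) * norm h"
        by (simp add: Cauchy_Schwarz_ineq2)
      also have "\<dots> \<le> M * norm h"
        using bound[OF that] by (intro mult_right_mono) auto
      finally show "norm (g x \<bullet> h) \<le> M * norm h" .
    qed
  qed auto
  then show ?thesis
    by simp
qed

lemma closed_segment_subset_newton_schulz_image:
  fixes U :: "real^'p^'n" and V :: "real^'p^'p"
  assumes U: "transpose U ** U = mat 1" and V: "orthogonal_matrix V"
    and y: "\<And>i. 0 \<le> y i" "\<And>i. y i \<le> 1"
    and x: "x \<in> closed_segment (U ** diag_mat y ** transpose V) (U ** transpose V)"
  shows "\<exists>W. spec_norm W \<le> 1 \<and> x = W ** calA W"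
proof -
  obtain t where t: "0 \<le> t" "t \<le> 1"
    and x_eq: "x = (1 - t) *\<^sub>R (U ** diag_mat y ** transpose V) + t *\<^sub>R (U ** transpose V)"
    using x by (auto simp: closed_segment_def)
  define z where "z i = (1 - t) * y i + t" for i
  have "U ** transpose V = U ** diag_mat (\<lambda>_. 1) ** transpose V"
    by simp
  then have "x = U ** diag_mat z ** transpose V"
    unfolding x_eq z_def
    by (simp only: scaleR_sandwich sandwich_add scaleR_diag_mat diag_mat_add) simp
  moreover have "0 \<le> z i" "z i \<le> 1" for i
    using t y[of i] mult_left_mono[OF y(2)[of i], of "1 - t"] by (simp_all add: z_def)
  then have "\<forall>i. \<exists>r. 0 \<le> r \<and> r \<le> 1 \<and> newton_schulz r = z i"
    using newton_schulz_onto_unit_interval by blast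
  then obtain r where r: "\<forall>i. 0 \<le> r i \<and> r i \<le> 1 \<and> newton_schulz (r i) = z i"
    unfolding choice_iff by blast
  ultimately have "x = (U ** diag_mat r ** transpose V) ** calA (U ** diag_mat r ** transpose V)"
    by (simp add: calA_orthonormal_sandwich[OF U V] r)
  moreover have "spec_norm (U ** diag_mat r ** transpose V) \<le> 1"
    using r by (intro spec_norm_orthonormal_sandwich_le[OF U V]) auto
  ultimately show ?thesis
    by blast
qed

lemma norm_polar_factor_minus_newton_schulz_le:
  fixes U :: "real^'p^'n" and V :: "real^'p^'p"
  assumes U: "transpose U ** U = mat 1" and V: "orthogonal_matrix V"
    and s: "\<And>i. 0 \<le> s i" "\<And>i. \<bar>s i * s i - 1\<bar> \<le> 1/6"
  shows "norm (U ** transpose V - U ** diag_mat (\<lambda>i. newton_schulz (s i)) ** transpose V)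
    \<le> 1/2 * (norm (diag_mat (\<lambda>i. s i * s i - 1)))\<^sup>2"
proof -
  have "U ** transpose V = U ** diag_mat (\<lambda>_. 1) ** transpose V"
    by simp
  then have "U ** transpose V - U ** diag_mat (\<lambda>i. newton_schulz (s i)) ** transpose V
      = U ** diag_mat (\<lambda>i. 1 - newton_schulz (s i)) ** transpose V"
    by (simp only: sandwich_diff diag_mat_diff)
  also have "norm \<dots> = norm (diag_mat (\<lambda>i. 1 - newton_schulz (s i)))"
    using V by (simp add: norm_orthonormal_sandwich[OF U] orthogonal_matrix_def)
  also have "\<dots> \<le> 1/2 * (norm (diag_mat (\<lambda>i. s i * s i - 1)))\<^sup>2"
    using newton_schulz_near_one(3)[OF s] by (intro norm_diag_mat_le_power2) auto
  finally show ?thesis .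
qed

lemma f_stiefel_proj_le:
  fixes f :: "real^'p^'n \<Rightarrow> real" and X :: "real^'p^'n"
  assumes diff: "\<And>Y. (f has_derivative (\<lambda>H. g Y \<bullet> H)) (at Y)"
    and bound: "\<And>W. spec_norm W \<le> 1 \<Longrightarrow> norm (g (W ** calA W)) \<le> M"
    and X: "norm (transpose X ** X - mat 1) \<le> 1/6"
  shows "f (stiefel_proj X) \<le> f (X ** calA X) + M / 2 * (norm (transpose X ** X - mat 1))\<^sup>2"
proof -
  have "rank X = CARD('p)"
    using X by (intro full_rank_if_gram_near_identity) simp
  then obtain U V s where U: "transpose U ** U = mat 1" and V: "orthogonal_matrix V"
    and s: "\<And>i. s i \<ge> 0" and X_eq: "X = U ** diag_mat s ** transpose V"
    and P_eq: "stiefel_proj X = U ** transpose V"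
    using stiefel_proj_svd by blast
  define N where "N = norm (transpose X ** X - mat 1)"
  have N: "N = norm (diag_mat (\<lambda>i. s i * s i - 1))"
    unfolding N_def by (rule norm_gram_minus_one_orthonormal_sandwich[OF U V X_eq])
  have s_near_one: "\<bar>s i * s i - 1\<bar> \<le> 1/6" for i
    using abs_le_norm_diag_mat[of "\<lambda>i. s i * s i - 1" i] N X N_def by simp
  define y where "y i = newton_schulz (s i)" for i
  have Y_eq: "X ** calA X = U ** diag_mat y ** transpose V"
    unfolding X_eq y_def by (rule calA_orthonormal_sandwich[OF U V])
  have "norm (g x) \<le> M" if "x \<in> closed_segment (X ** calA X) (stiefel_proj X)" for x
    using closed_segment_subset_newton_schulz_image[OF U V, of y x] that bound
      newton_schulz_near_one(1,2)[OF s s_near_one]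
    unfolding P_eq Y_eq y_def by blast
  then have "f (stiefel_proj X) \<le> f (X ** calA X) + M * norm (stiefel_proj X - X ** calA X)"
    using diff by (intro gradient_bound_closed_segment)
  also have "\<dots> \<le> f (X ** calA X) + M * (1/2 * N\<^sup>2)"
  proof -
    have "M \<ge> 0"
      using bound[of 0] by (simp add: spec_norm_le_iff order_trans[OF norm_ge_zero])
    moreover have "norm (stiefel_proj X - X ** calA X) \<le> 1/2 * N\<^sup>2"
      using norm_polar_factor_minus_newton_schulz_le[OF U V, of s] s s_near_one
      unfolding P_eq Y_eq N y_def by blast
    ultimately show ?thesis
      by (intro add_left_mono mult_left_mono)
  qed
  finally show ?thesis
    by (simp add: N_def)
qed

theorem mainTheorem15:
  fixes f :: "real^'p^'n \<Rightarrow> real" and gradf :: "real^'p^'n \<Rightarrow> real^'p^'n"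
    and \<beta> :: real and X :: "real^'p^'n"
  assumes np: "CARD('p) \<le> CARD('n)"
    and diff: "\<And>Y. (f has_derivative (\<lambda>H. gradf Y \<bullet> H)) (at Y)"
    and lipf: "locally_lipschitz f"
    and lipg: "locally_lipschitz gradf"
    and beta: "\<beta> > 0"
    and X: "norm (transpose X ** X - mat 1) \<le> 1/6"
  shows "hfun f \<beta> (stiefel_proj X) \<le> hfun f \<beta> X
     - (\<beta>/4 - (SUP Z\<in>{Z. spec_norm Z \<le> 1 + 1/12}. norm (gradf (Z ** calA Z))) / 2)
       * (norm (transpose X ** X - mat 1))\<^sup>2"
proof -
  let ?K = "{Z::real^'p^'n. spec_norm Z \<le> 1 + 1/12}"
  let ?g = "\<lambda>Z. norm (gradf (Z ** calA Z))"
  have "continuous_on ?K (\<lambda>Z. Z ** calA Z)"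
    unfolding calA_def matrix_matrix_mult_def transpose_def mat_def by (intro continuous_intros)
  then have "continuous_on ?K ?g"
    by (intro continuous_on_norm continuous_on_compose2[OF locally_lipschitz_imp_continuous[OF lipg]])
      auto
  then have "bdd_above (?g ` ?K)"
    by (intro bounded_imp_bdd_above compact_imp_bounded compact_continuous_image compact_spec_norm_le)
  then have "?g W \<le> (SUP Z\<in>?K. ?g Z)" if "spec_norm W \<le> 1" for W
    using that by (intro cSUP_upper) auto
  then have "f (stiefel_proj X) \<le> f (X ** calA X)
      + (SUP Z\<in>?K. ?g Z) / 2 * (norm (transpose X ** X - mat 1))\<^sup>2"
    by (rule f_stiefel_proj_le[OF diff _ X])
  moreover have "hfun f \<beta> (stiefel_proj X) = f (stiefel_proj X)"
    using X by (intro hfun_stiefel stiefel_proj_orthonormal full_rank_if_gram_near_identity) simp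
  ultimately show ?thesis
    by (simp add: hfun_def algebra_simps)
qed

end
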